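(* Let $\Omega\subseteq\mathbb{R}^n$ be open, let $D$ be a dense subset of $\Omega$, and let $f:D\to\mathbb{R}$ be continuous on $D$. Then (i) $F(D,\Omega,f)(x)=f(x)$ for all $x\in D$, and (ii) $F(D,\Omega,f)$ is H-continuous.
   Context: $\overline{\mathbb{R}}=\mathbb{R}\cup\{\pm\infty\}$, $\mathbb{I}\overline{\mathbb{R}}$ is the set of closed intervals $[\underline a,\overline a]$ with $\underline a\le\overline a$ in $\overline{\mathbb{R}}$, $a\in\overline{\mathbb{R}}$ identified with $[a,a]$. $\mathbb{A}(X)$ is the set of functions $X\to\mathbb{I}\overline{\mathbb{R}}$. $B_\delta(x)=\{y\in\Omega:\|x-y\|<\delta\}$. For dense $D\subseteq\Omega$ and $f\in\mathbb{A}(D)$: $I(D,\Omega,f)(x)=\sup_{\delta>0}\inf\{z\in f(y):y\in B_\delta(x)\cap D\}$, $S(D,\Omega,f)(x)=\inf_{\delta>0}\sup\{z\in f(y):y\in B_\delta(x)\cap D\}$, $F(D,\Omega,f)(x)=[I(D,\Omega,f)(x),S(D,\Omega,f)(x)]$ for $x\in\Omega$; $F(f)=F(\Omega,\Omega,f)$. A function $h\in\mathbb{A}(\Omega)$ is H-continuous if for every $g\in\mathbb{A}(\Omega)$ with $g(x)\subseteq h(x)$ for all $x\in\Omega$ one has $F(g)=h$. *)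

theory Defs
  imports "HOL-Analysis.Analysis"
begin

type_synonym ivl = "ereal \<times> ereal"

definition ivl_set :: "ivl \<Rightarrow> ereal set" where
  "ivl_set a = {z. fst a \<le> z \<and> z \<le> snd a}"

definition pt :: "ereal \<Rightarrow> ivl" where
  "pt a = (a, a)"

definition ivl_funs :: "'a set \<Rightarrow> ('a \<Rightarrow> ivl) set" where
  "ivl_funs X = {f. \<forall>x\<in>X. fst (f x) \<le> snd (f x)}"

definition Bd :: "'a::real_normed_vector set \<Rightarrow> real \<Rightarrow> 'a \<Rightarrow> 'a set" where
  "Bd \<Omega> \<delta> x = {y\<in>\<Omega>. norm (x - y) < \<delta>}"

definition Ilow :: "'a::real_normed_vector set \<Rightarrow> 'a set \<Rightarrow> ('a \<Rightarrow> ivl) \<Rightarrow> 'a \<Rightarrow> ereal" where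
  "Ilow D \<Omega> f x = (SUP \<delta>\<in>{0<..}. Inf {z. \<exists>y\<in>Bd \<Omega> \<delta> x \<inter> D. z \<in> ivl_set (f y)})"

definition Supp :: "'a::real_normed_vector set \<Rightarrow> 'a set \<Rightarrow> ('a \<Rightarrow> ivl) \<Rightarrow> 'a \<Rightarrow> ereal" where
  "Supp D \<Omega> f x = (INF \<delta>\<in>{0<..}. Sup {z. \<exists>y\<in>Bd \<Omega> \<delta> x \<inter> D. z \<in> ivl_set (f y)})"

definition Fenv :: "'a::real_normed_vector set \<Rightarrow> 'a set \<Rightarrow> ('a \<Rightarrow> ivl) \<Rightarrow> 'a \<Rightarrow> ivl" where
  "Fenv D \<Omega> f x = (Ilow D \<Omega> f x, Supp D \<Omega> f x)"

definition H_continuous :: "'a::real_normed_vector set \<Rightarrow> ('a \<Rightarrow> ivl) \<Rightarrow> bool" where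
  "H_continuous \<Omega> h \<longleftrightarrow> h \<in> ivl_funs \<Omega> \<and>
     (\<forall>g \<in> ivl_funs \<Omega>. (\<forall>x\<in>\<Omega>. ivl_set (g x) \<subseteq> ivl_set (h x)) \<longrightarrow>
        (\<forall>x\<in>\<Omega>. Fenv \<Omega> \<Omega> g x = h x))"

end

theory Submission
  imports Defs
begin

text \<open>
  At a point x of D the envelopes of a continuous f are squeezed between f x - e and f x + e,
  so they reproduce f. For H-continuity, let g be an interval function inside
  h = F(D,\<Omega>,f). Where h is degenerate, i.e. on D, g must equal f. Hence the lower
  envelope of g over \<Omega> is at most that of f over D: the infimum runs over more points with
  the same values on D. It is also at least that of f, because a point y in a ball around x
  has a smaller ball around it inside the first one, so g y \<ge> I y is bounded below by the
  infimum of f over the first ball. Upper envelopes follow from the duality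
  S \<phi> = - I (- \<phi>).
\<close>

definition lower_env :: "'a::real_normed_vector set \<Rightarrow> 'a set \<Rightarrow> ('a \<Rightarrow> ereal) \<Rightarrow> 'a \<Rightarrow> ereal" where
  "lower_env D \<Omega> \<phi> x = (SUP \<delta>\<in>{0<..}. INF y\<in>Bd \<Omega> \<delta> x \<inter> D. \<phi> y)"

definition upper_env :: "'a::real_normed_vector set \<Rightarrow> 'a set \<Rightarrow> ('a \<Rightarrow> ereal) \<Rightarrow> 'a \<Rightarrow> ereal" where
  "upper_env D \<Omega> \<phi> x = (INF \<delta>\<in>{0<..}. SUP y\<in>Bd \<Omega> \<delta> x \<inter> D. \<phi> y)"

lemma upper_env_eq_uminus_lower_env:
  "upper_env D \<Omega> \<phi> x = - lower_env D \<Omega> (\<lambda>y. - \<phi> y) x"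
  by (simp add: upper_env_def lower_env_def ereal_INF_uminus_eq ereal_SUP_uminus_eq)

lemma Inf_ivl_set_Union:
  assumes "\<forall>y\<in>A. fst (g y) \<le> snd (g y)"
  shows "Inf {z. \<exists>y\<in>A. z \<in> ivl_set (g y)} = (INF y\<in>A. fst (g y))"
proof (rule antisym)
  show "Inf {z. \<exists>y\<in>A. z \<in> ivl_set (g y)} \<le> (INF y\<in>A. fst (g y))"
    by (rule INF_greatest, rule Inf_lower) (use assms in \<open>auto simp: ivl_set_def\<close>)
  show "(INF y\<in>A. fst (g y)) \<le> Inf {z. \<exists>y\<in>A. z \<in> ivl_set (g y)}"
    by (rule Inf_greatest) (auto simp: ivl_set_def intro: INF_lower2)
qed

lemma Sup_ivl_set_Union:
  assumes "\<forall>y\<in>A. fst (g y) \<le> snd (g y)"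
  shows "Sup {z. \<exists>y\<in>A. z \<in> ivl_set (g y)} = (SUP y\<in>A. snd (g y))"
proof (rule antisym)
  show "(SUP y\<in>A. snd (g y)) \<le> Sup {z. \<exists>y\<in>A. z \<in> ivl_set (g y)}"
    by (rule SUP_least, rule Sup_upper) (use assms in \<open>auto simp: ivl_set_def\<close>)
  show "Sup {z. \<exists>y\<in>A. z \<in> ivl_set (g y)} \<le> (SUP y\<in>A. snd (g y))"
    by (rule Sup_least) (auto simp: ivl_set_def intro: SUP_upper2)
qed

lemma Fenv_eq_envs:
  assumes "g \<in> ivl_funs D"
  shows "Fenv D \<Omega> g x = (lower_env D \<Omega> (\<lambda>y. fst (g y)) x, upper_env D \<Omega> (\<lambda>y. snd (g y)) x)"
  using assms by (simp add: Fenv_def Ilow_def Supp_def lower_env_def upper_env_def ivl_funs_def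
      Inf_ivl_set_Union Sup_ivl_set_Union)

lemma ivl_set_subset_endpoints:
  assumes "fst a \<le> snd a" and "ivl_set a \<subseteq> ivl_set b"
  shows "fst b \<le> fst a" and "snd a \<le> snd b"
  using assms by (auto simp: ivl_set_def subset_iff)

lemma Bd_subset_Bd:
  assumes "y \<in> Bd \<Omega> \<delta> x"
  shows "Bd \<Omega> (\<delta> - norm (x - y)) y \<subseteq> Bd \<Omega> \<delta> x"
proof
  fix z assume "z \<in> Bd \<Omega> (\<delta> - norm (x - y)) y"
  moreover have "norm (x - z) \<le> norm (x - y) + norm (y - z)"
    using norm_triangle_ineq[of "x - y" "y - z"] by simp
  ultimately show "z \<in> Bd \<Omega> \<delta> x" by (auto simp: Bd_def)
qed

lemma lower_env_le:
  assumes "x \<in> D" and "x \<in> \<Omega>"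
  shows "lower_env D \<Omega> \<phi> x \<le> \<phi> x"
  unfolding lower_env_def
  by (rule SUP_least, rule INF_lower2[of x]) (use assms in \<open>auto simp: Bd_def\<close>)

lemma lower_env_superset_mono:
  assumes "D \<subseteq> D'" and "\<forall>y\<in>D. \<psi> y \<le> \<phi> y"
  shows "lower_env D' \<Omega> \<psi> x \<le> lower_env D \<Omega> \<phi> x"
  unfolding lower_env_def
  by (rule SUP_mono, rule bexI, rule INF_mono) (use assms in auto)

lemma lower_env_le_upper_env:
  assumes "D \<subseteq> \<Omega>" and "x \<in> closure D"
  shows "lower_env D \<Omega> \<phi> x \<le> upper_env D \<Omega> \<phi> x"
  unfolding lower_env_def upper_env_def
proof (rule SUP_least, rule INF_greatest)
  fix d1 d2 :: real assume "d1 \<in> {0<..}" "d2 \<in> {0<..}"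
  then obtain y where "y \<in> D" "dist y x < min d1 d2"
    using assms(2) unfolding closure_approachable by (metis greaterThan_iff min_less_iff_conj)
  then have "y \<in> Bd \<Omega> d1 x \<inter> D" and "y \<in> Bd \<Omega> d2 x \<inter> D"
    using assms(1) by (auto simp: Bd_def dist_norm norm_minus_commute)
  then show "(INF y\<in>Bd \<Omega> d1 x \<inter> D. \<phi> y) \<le> (SUP y\<in>Bd \<Omega> d2 x \<inter> D. \<phi> y)"
    by (blast intro: order_trans[OF INF_lower SUP_upper])
qed

lemma lower_env_le_lower_env_if_below:
  assumes "\<forall>y\<in>\<Omega>. lower_env D \<Omega> \<phi> y \<le> \<psi> y"
  shows "lower_env D \<Omega> \<phi> x \<le> lower_env \<Omega> \<Omega> \<psi> x"
  unfolding lower_env_def[of _ \<Omega>]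
proof (rule SUP_mono, intro bexI INF_greatest)
  fix \<delta> :: real and y assume "\<delta> \<in> {0<..}" and y: "y \<in> Bd \<Omega> \<delta> x \<inter> \<Omega>"
  then have "\<delta> - norm (x - y) \<in> {0<..}" by (auto simp: Bd_def)
  moreover have "Bd \<Omega> (\<delta> - norm (x - y)) y \<subseteq> Bd \<Omega> \<delta> x"
    using Bd_subset_Bd y by blast
  ultimately have "(INF z\<in>Bd \<Omega> \<delta> x \<inter> D. \<phi> z) \<le> lower_env D \<Omega> \<phi> y"
    unfolding lower_env_def by (blast intro: SUP_upper2 INF_superset_mono)
  also have "\<dots> \<le> \<psi> y" using assms y by blast
  finally show "(INF z\<in>Bd \<Omega> \<delta> x \<inter> D. \<phi> z) \<le> \<psi> y" .
qed

lemma lower_env_ge_continuous: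
  assumes "continuous_on D f" and "x \<in> D"
  shows "ereal (f x) \<le> lower_env D \<Omega> (\<lambda>y. ereal (f y)) x"
proof (rule ereal_le_epsilon2)
  fix e :: real assume "e > 0"
  then obtain d where "d > 0" and d: "\<forall>y\<in>D. dist y x < d \<longrightarrow> dist (f y) (f x) < e"
    using assms unfolding continuous_on_iff by blast
  have "ereal (f x - e) \<le> (INF y\<in>Bd \<Omega> d x \<inter> D. ereal (f y))"
  proof (rule INF_greatest)
    fix y assume "y \<in> Bd \<Omega> d x \<inter> D"
    then have "dist (f y) (f x) < e"
      using d by (auto simp: Bd_def dist_norm norm_minus_commute)
    then show "ereal (f x - e) \<le> ereal (f y)" by (simp add: dist_real_def)
  qed
  also have "\<dots> \<le> lower_env D \<Omega> (\<lambda>y. ereal (f y)) x"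
    unfolding lower_env_def using \<open>d > 0\<close> by (auto intro: SUP_upper2)
  finally have "ereal (f x - e) + ereal e \<le> lower_env D \<Omega> (\<lambda>y. ereal (f y)) x + ereal e"
    by (rule add_right_mono)
  then show "ereal (f x) \<le> lower_env D \<Omega> (\<lambda>y. ereal (f y)) x + ereal e"
    by simp
qed

lemma upper_env_ge:
  assumes "x \<in> D" and "x \<in> \<Omega>"
  shows "\<phi> x \<le> upper_env D \<Omega> \<phi> x"
  using lower_env_le[OF assms, of "\<lambda>y. - \<phi> y"]
  by (metis upper_env_eq_uminus_lower_env ereal_minus_le_minus ereal_uminus_uminus)

lemma upper_env_subset_mono:
  assumes "D \<subseteq> D'" and "\<forall>y\<in>D. \<phi> y \<le> \<psi> y"
  shows "upper_env D \<Omega> \<phi> x \<le> upper_env D' \<Omega> \<psi> x"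
  using lower_env_superset_mono[of D D' "\<lambda>y. - \<psi> y" "\<lambda>y. - \<phi> y"] assms
  by (simp add: upper_env_eq_uminus_lower_env)

lemma upper_env_le_upper_env_if_above:
  assumes "\<forall>y\<in>\<Omega>. \<psi> y \<le> upper_env D \<Omega> \<phi> y"
  shows "upper_env \<Omega> \<Omega> \<psi> x \<le> upper_env D \<Omega> \<phi> x"
proof -
  have "\<forall>y\<in>\<Omega>. lower_env D \<Omega> (\<lambda>y. - \<phi> y) y \<le> - \<psi> y"
    using assms by (metis upper_env_eq_uminus_lower_env ereal_minus_le_minus ereal_uminus_uminus)
  then show ?thesis
    using lower_env_le_lower_env_if_below by (simp add: upper_env_eq_uminus_lower_env)
qed

lemma upper_env_le_continuous:
  assumes "continuous_on D f" and "x \<in> D"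
  shows "upper_env D \<Omega> (\<lambda>y. ereal (f y)) x \<le> ereal (f x)"
  using lower_env_ge_continuous[OF continuous_on_minus[OF assms(1)] assms(2), of \<Omega>]
  by (simp add: upper_env_eq_uminus_lower_env ereal_uminus_le_reorder)

lemma Fenv_pt_continuous:
  assumes "D \<subseteq> \<Omega>" and "continuous_on D f" and "x \<in> D"
  shows "Fenv D \<Omega> (\<lambda>y. pt (ereal (f y))) x = pt (ereal (f x))"
proof -
  have "(\<lambda>y. pt (ereal (f y))) \<in> ivl_funs D" by (simp add: ivl_funs_def pt_def)
  moreover have "lower_env D \<Omega> (\<lambda>y. ereal (f y)) x = ereal (f x)"
    using lower_env_le lower_env_ge_continuous assms by (metis antisym subsetD)
  moreover have "upper_env D \<Omega> (\<lambda>y. ereal (f y)) x = ereal (f x)"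
    using upper_env_ge upper_env_le_continuous assms by (metis antisym subsetD)
  ultimately show ?thesis by (simp add: Fenv_eq_envs pt_def)
qed

lemma H_continuous_Fenv_pt:
  assumes "D \<subseteq> \<Omega>" and "\<Omega> \<subseteq> closure D"
    and fixed: "\<forall>x\<in>D. Fenv D \<Omega> (\<lambda>y. pt (\<phi> y)) x = pt (\<phi> x)"
  shows "H_continuous \<Omega> (Fenv D \<Omega> (\<lambda>y. pt (\<phi> y)))"
proof -
  let ?I = "lower_env D \<Omega> \<phi>" and ?S = "upper_env D \<Omega> \<phi>"
  have h: "Fenv D \<Omega> (\<lambda>y. pt (\<phi> y)) x = (?I x, ?S x)" for x
    by (simp add: Fenv_eq_envs ivl_funs_def pt_def)
  have on_D: "?I y = \<phi> y" "?S y = \<phi> y" if "y \<in> D" for y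
    using fixed[rule_format, OF that] unfolding h by (simp_all add: pt_def)
  have "Fenv \<Omega> \<Omega> g x = (?I x, ?S x)"
    if g: "g \<in> ivl_funs \<Omega>" and sub: "\<forall>x\<in>\<Omega>. ivl_set (g x) \<subseteq> ivl_set (?I x, ?S x)"
      and "x \<in> \<Omega>" for g x
  proof -
    have between: "?I y \<le> fst (g y)" "fst (g y) \<le> snd (g y)" "snd (g y) \<le> ?S y"
      if "y \<in> \<Omega>" for y
      using ivl_set_subset_endpoints[of "g y" "(?I y, ?S y)"] g sub that
      by (auto simp: ivl_funs_def)
    have "\<forall>y\<in>D. fst (g y) \<le> \<phi> y" "\<forall>y\<in>D. \<phi> y \<le> snd (g y)"
      using between on_D assms(1) by (metis order_trans subsetD)+
    then have "lower_env \<Omega> \<Omega> (\<lambda>y. fst (g y)) x = ?I x"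
      and "upper_env \<Omega> \<Omega> (\<lambda>y. snd (g y)) x = ?S x"
      using assms(1) between(1,3)
      by (simp_all add: antisym lower_env_superset_mono lower_env_le_lower_env_if_below
          upper_env_subset_mono upper_env_le_upper_env_if_above)
    then show ?thesis using g by (simp add: Fenv_eq_envs)
  qed
  moreover have "Fenv D \<Omega> (\<lambda>y. pt (\<phi> y)) \<in> ivl_funs \<Omega>"
    using assms(1,2) by (auto simp: h ivl_funs_def intro: lower_env_le_upper_env)
  ultimately show ?thesis by (simp add: H_continuous_def h)
qed

theorem theorem7:
  fixes \<Omega> D :: "'n::euclidean_space set" and f :: "'n \<Rightarrow> real"
  assumes "open \<Omega>" and "D \<subseteq> \<Omega>" and "\<Omega> \<subseteq> closure D"
    and "continuous_on D f"
  shows "(\<forall>x\<in>D. Fenv D \<Omega> (\<lambda>y. pt (ereal (f y))) x = pt (ereal (f x)))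
         \<and> H_continuous \<Omega> (Fenv D \<Omega> (\<lambda>y. pt (ereal (f y))))"
proof -
  have fixed: "\<forall>x\<in>D. Fenv D \<Omega> (\<lambda>y. pt (ereal (f y))) x = pt (ereal (f x))"
    using Fenv_pt_continuous assms(2,4) by blast
  then show ?thesis using H_continuous_Fenv_pt[OF assms(2,3) fixed] by blast
qed

end
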